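(* Let $(X_1,\le_1)$, $(X_2,\le_2)$ be partially ordered sets and $T:X_1\to X_2$ a map. The following are equivalent: (a) $T$ has the Mcp; (b) $T$ is monotone and for every $A\subset X_1$ and $u\in X_2$ such that $T(a)\le_2 u$ for all $a\in A$, we have $T(a)\le_2u$ for all $a\in\widehat A$; (c) $T$ is monotone and $T(\overline A)\subset\overline{T(A)}$ for every $A\subset X_1$; (d) $T(\widehat A)\subset\widehat{T(A)}$ for every $A\subset X_1$; (e) for every $A\subset X_1$ having a tip, the set $T(A)$ has a tip and $T({\sf tip}\,A)={\sf tip}\,T(A)$.
   Context: Let $(X,\le)$ be a partially ordered set. A subset $D\subset X$ is directed if every finite subset of $D$ (including the empty one) has an upper bound in $D$; in particular directed sets are nonempty. $A\subset X$ is a lower set if $x\in A$ and $y\le x$ imply $y\in A$. A subset $A\subset X$ is directed-sup-closed if the supremum of every directed $D\subset A$ which has a supremum in $X$ belongs to $A$. For $A\subset X$, $\overline A$ is the smallest directed-sup-closed subset of $X$ containing $A$, and $\widehat A$ is the smallest subset of $X$ containing $A$ which is both a lower set and directed-sup-closed (closures in $X_1$ resp. $X_2$ as appropriate). $A$ has a tip if $\overline A$ has a maximum; this maximum is denoted ${\sf tip}\,A$. A map $T:X_1\to X_2$ between partially ordered sets has the Monotone Convergence Property (Mcp) if for every directed $D\subset X_1$ having a supremum, $T(D)$ has a supremum and $T(\sup D)=\sup T(D)$. *)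

theory Defs
  imports Main
begin

definition dir_set :: "'a::order set \<Rightarrow> bool" where
  "dir_set D \<longleftrightarrow> (\<forall>F. finite F \<and> F \<subseteq> D \<longrightarrow> (\<exists>u\<in>D. \<forall>x\<in>F. x \<le> u))"

definition is_sup_of :: "'a::order set \<Rightarrow> 'a \<Rightarrow> bool" where
  "is_sup_of D s \<longleftrightarrow> (\<forall>x\<in>D. x \<le> s) \<and> (\<forall>u. (\<forall>x\<in>D. x \<le> u) \<longrightarrow> s \<le> u)"

definition lower_set :: "'a::order set \<Rightarrow> bool" where
  "lower_set A \<longleftrightarrow> (\<forall>x\<in>A. \<forall>y. y \<le> x \<longrightarrow> y \<in> A)"

definition dsup_closed :: "'a::order set \<Rightarrow> bool" where
  "dsup_closed A \<longleftrightarrow> (\<forall>D s. dir_set D \<and> D \<subseteq> A \<and> is_sup_of D s \<longrightarrow> s \<in> A)"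

text \<open>Smallest directed-sup-closed superset (overline A).\<close>
definition dclos :: "'a::order set \<Rightarrow> 'a set" where
  "dclos A = \<Inter>{C. A \<subseteq> C \<and> dsup_closed C}"

text \<open>Smallest directed-sup-closed lower superset (widehat A).\<close>
definition lclos :: "'a::order set \<Rightarrow> 'a set" where
  "lclos A = \<Inter>{C. A \<subseteq> C \<and> lower_set C \<and> dsup_closed C}"

definition has_tip :: "'a::order set \<Rightarrow> bool" where
  "has_tip A \<longleftrightarrow> (\<exists>m\<in>dclos A. \<forall>x\<in>dclos A. x \<le> m)"

definition tip :: "'a::order set \<Rightarrow> 'a" where
  "tip A = (THE m. m \<in> dclos A \<and> (\<forall>x\<in>dclos A. x \<le> m))"

definition has_mcp :: "('a::order \<Rightarrow> 'b::order) \<Rightarrow> bool" where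
  "has_mcp T \<longleftrightarrow> (\<forall>D s. dir_set D \<and> is_sup_of D s \<longrightarrow> is_sup_of (T ` D) (T s))"

end

theory Submission
  imports Defs
begin

text \<open>
  Under the Mcp, preimages under \<open>T\<close> of directed-sup-closed sets are directed-sup-closed
  (and, \<open>T\<close> being monotone, preimages of lower sets are lower), so pulling back the closures of
  \<open>T(A)\<close> gives (c), (d) and (e); as the principal down-sets \<open>{..u}\<close> are closed lower sets,
  (d) gives (b). Conversely, the supremum \<open>s\<close> of a directed set \<open>D\<close> lies in both closures of \<open>D\<close>
  and is the tip of \<open>D\<close>, so each of (b)--(e) places \<open>T s\<close> in a closure of \<open>T(D)\<close>, which
  lies below every upper bound of \<open>T(D)\<close>. Monotonicity comes from the two-point directed
  sets \<open>{x, y}\<close> with \<open>x \<le> y\<close>.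
\<close>

lemma dclos_superset: "A \<subseteq> dclos A"
  unfolding dclos_def by blast

lemma dsup_closed_dclos: "dsup_closed (dclos A)"
  unfolding dclos_def dsup_closed_def by blast

lemma dclos_minimal: "A \<subseteq> C \<Longrightarrow> dsup_closed C \<Longrightarrow> dclos A \<subseteq> C"
  unfolding dclos_def by blast

lemma lclos_superset: "A \<subseteq> lclos A"
  unfolding lclos_def by blast

lemma dsup_closed_lclos: "dsup_closed (lclos A)"
  unfolding lclos_def dsup_closed_def by blast

lemma lower_set_lclos: "lower_set (lclos A)"
  unfolding lclos_def lower_set_def by blast

lemma lclos_minimal: "A \<subseteq> C \<Longrightarrow> lower_set C \<Longrightarrow> dsup_closed C \<Longrightarrow> lclos A \<subseteq> C"
  unfolding lclos_def by blast

lemma dsup_closed_atMost: "dsup_closed {..u::'a::order}"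
  unfolding dsup_closed_def is_sup_of_def by blast

lemma lower_set_atMost: "lower_set {..u::'a::order}"
  unfolding lower_set_def by auto

lemma dclos_subset_atMost: "\<forall>x\<in>A. x \<le> u \<Longrightarrow> dclos A \<subseteq> {..u}"
  by (rule dclos_minimal) (auto intro: dsup_closed_atMost)

lemma lclos_subset_atMost: "\<forall>x\<in>A. x \<le> u \<Longrightarrow> lclos A \<subseteq> {..u}"
  by (rule lclos_minimal) (auto intro: dsup_closed_atMost lower_set_atMost)

lemma sup_in_dclos: "dir_set D \<Longrightarrow> is_sup_of D s \<Longrightarrow> s \<in> dclos D"
  using dsup_closed_dclos[of D] dclos_superset[of D] unfolding dsup_closed_def by blast

lemma sup_in_lclos: "dir_set D \<Longrightarrow> is_sup_of D s \<Longrightarrow> s \<in> lclos D"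
  using dsup_closed_lclos[of D] lclos_superset[of D] unfolding dsup_closed_def by blast

lemma lclos_singleton_lower: "x \<le> y \<Longrightarrow> x \<in> lclos {y}"
  using lower_set_lclos[of "{y}"] lclos_superset[of "{y}"] unfolding lower_set_def by blast

lemma dir_set_pair: "x \<le> (y::'a::order) \<Longrightarrow> dir_set {x, y}"
  unfolding dir_set_def by auto

lemma is_sup_of_pair: "x \<le> (y::'a::order) \<Longrightarrow> is_sup_of {x, y} y"
  unfolding is_sup_of_def by auto

lemma dir_set_image:
  assumes "mono T" and "dir_set D"
  shows "dir_set (T ` D)"
  unfolding dir_set_def
proof (intro allI impI)
  fix F assume "finite F \<and> F \<subseteq> T ` D"
  then obtain G where G: "G \<subseteq> D" "finite G" "F = T ` G"
    by (meson finite_subset_image)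
  then obtain u where "u \<in> D" "\<forall>x\<in>G. x \<le> u"
    using assms(2) unfolding dir_set_def by blast
  then show "\<exists>u\<in>T ` D. \<forall>x\<in>F. x \<le> u"
    using G assms(1) by (auto dest: monoD)
qed

lemma tip_eqI: "m \<in> dclos A \<Longrightarrow> \<forall>x\<in>dclos A. x \<le> m \<Longrightarrow> tip A = m"
  unfolding tip_def by (rule the_equality) (auto intro: order.antisym)

lemma tip_in_dclos: "has_tip A \<Longrightarrow> tip A \<in> dclos A"
  unfolding has_tip_def using tip_eqI by blast

lemma le_tip: "has_tip A \<Longrightarrow> x \<in> dclos A \<Longrightarrow> x \<le> tip A"
  unfolding has_tip_def using tip_eqI by blast

lemma has_tipI:
  assumes "s \<in> dclos A" and "\<forall>x\<in>A. x \<le> s"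
  shows "has_tip A \<and> tip A = s"
  using assms dclos_subset_atMost[OF assms(2)] tip_eqI unfolding has_tip_def by blast

lemma has_mcp_mono:
  fixes T :: "'a::order \<Rightarrow> 'b::order"
  assumes "has_mcp T"
  shows "mono T"
proof (rule monoI)
  fix x y :: 'a assume "x \<le> y"
  then have "is_sup_of (T ` {x, y}) (T y)"
    using assms dir_set_pair is_sup_of_pair unfolding has_mcp_def by blast
  then show "T x \<le> T y"
    unfolding is_sup_of_def by blast
qed

lemma has_mcpI:
  assumes "mono T"
    and "\<And>D s u. dir_set D \<Longrightarrow> is_sup_of D s \<Longrightarrow> \<forall>x\<in>D. T x \<le> u \<Longrightarrow> T s \<le> u"
  shows "has_mcp T"
  using assms unfolding has_mcp_def is_sup_of_def by (auto dest: monoD)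

lemma dsup_closed_vimage:
  assumes "has_mcp T" and "dsup_closed C"
  shows "dsup_closed (T -` C)"
  unfolding dsup_closed_def
proof (intro allI impI)
  fix D s assume D: "dir_set D \<and> D \<subseteq> T -` C \<and> is_sup_of D s"
  then have "dir_set (T ` D)" "T ` D \<subseteq> C" "is_sup_of (T ` D) (T s)"
    using assms(1) has_mcp_mono dir_set_image unfolding has_mcp_def by blast+
  then show "s \<in> T -` C"
    using assms(2) unfolding dsup_closed_def by blast
qed

lemma lower_set_vimage: "mono T \<Longrightarrow> lower_set C \<Longrightarrow> lower_set (T -` C)"
  unfolding lower_set_def by (auto dest: monoD)

lemma has_mcp_image_dclos:
  assumes "has_mcp T"
  shows "T ` dclos A \<subseteq> dclos (T ` A)"
proof -
  have "dclos A \<subseteq> T -` dclos (T ` A)"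
    using assms dclos_superset[of "T ` A"]
    by (intro dclos_minimal dsup_closed_vimage dsup_closed_dclos) auto
  then show ?thesis by blast
qed

lemma has_mcp_image_lclos:
  assumes "has_mcp T"
  shows "T ` lclos A \<subseteq> lclos (T ` A)"
proof -
  have "lclos A \<subseteq> T -` lclos (T ` A)"
    using assms has_mcp_mono lclos_superset[of "T ` A"]
    by (intro lclos_minimal dsup_closed_vimage lower_set_vimage dsup_closed_lclos
        lower_set_lclos) auto
  then show ?thesis by blast
qed

lemma has_mcp_tip:
  assumes "has_mcp T" and "has_tip A"
  shows "has_tip (T ` A) \<and> T (tip A) = tip (T ` A)"
proof -
  have "T (tip A) \<in> dclos (T ` A)"
    using assms has_mcp_image_dclos tip_in_dclos by blast
  moreover have "\<forall>y\<in>T ` A. y \<le> T (tip A)"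
    using assms(2) le_tip dclos_superset has_mcp_mono[OF assms(1)] by (blast dest: monoD)
  ultimately show ?thesis
    using has_tipI[of "T (tip A)" "T ` A"] by simp
qed

lemma lclos_bounded_if_image_lclos:
  assumes "\<forall>A. T ` lclos A \<subseteq> lclos (T ` A)"
  shows "\<forall>A u. (\<forall>a\<in>A. T a \<le> u) \<longrightarrow> (\<forall>a\<in>lclos A. T a \<le> u)"
proof (intro allI impI ballI)
  fix A u a assume "\<forall>a\<in>A. T a \<le> u" and "a \<in> lclos A"
  then have "T a \<in> lclos (T ` A)" "lclos (T ` A) \<subseteq> {..u}"
    using assms lclos_subset_atMost[of "T ` A" u] by auto
  then show "T a \<le> u" by auto
qed

lemma mono_if_image_lclos:
  fixes T :: "'a::order \<Rightarrow> 'b::order"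
  assumes "\<forall>A. T ` lclos A \<subseteq> lclos (T ` A)"
  shows "mono T"
proof (rule monoI)
  fix x y :: 'a assume "x \<le> y"
  then have "T x \<in> lclos {T y}"
    using assms lclos_singleton_lower by fastforce
  then show "T x \<le> T y"
    using lclos_subset_atMost[of "{T y}" "T y"] by auto
qed

lemma has_mcp_if_lclos_bounded:
  assumes "mono T" and "\<forall>A u. (\<forall>a\<in>A. T a \<le> u) \<longrightarrow> (\<forall>a\<in>lclos A. T a \<le> u)"
  shows "has_mcp T"
proof (rule has_mcpI[OF assms(1)])
  fix D s u assume "dir_set D" "is_sup_of D s" "\<forall>x\<in>D. T x \<le> u"
  then show "T s \<le> u"
    using assms(2) sup_in_lclos by blast
qed

lemma has_mcp_if_image_lclos:
  fixes T :: "'a::order \<Rightarrow> 'b::order"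
  assumes "\<forall>A. T ` lclos A \<subseteq> lclos (T ` A)"
  shows "has_mcp T"
  using has_mcp_if_lclos_bounded mono_if_image_lclos[OF assms]
    lclos_bounded_if_image_lclos[OF assms] by blast

lemma has_mcp_if_image_dclos:
  assumes "mono T" and "\<forall>A. T ` dclos A \<subseteq> dclos (T ` A)"
  shows "has_mcp T"
proof (rule has_mcpI[OF assms(1)])
  fix D s u assume "dir_set D" "is_sup_of D s" "\<forall>x\<in>D. T x \<le> u"
  then show "T s \<le> u"
    using assms(2) sup_in_dclos dclos_subset_atMost[of "T ` D" u] by blast
qed

lemma has_mcp_if_tip:
  fixes T :: "'a::order \<Rightarrow> 'b::order"
  assumes preserves: "\<forall>A. has_tip A \<longrightarrow> has_tip (T ` A) \<and> T (tip A) = tip (T ` A)"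
  shows "has_mcp T"
proof -
  have image_tip: "has_tip (T ` D) \<and> T s = tip (T ` D)"
    if "s \<in> dclos D" "\<forall>x\<in>D. x \<le> s" for D s
  proof -
    have "has_tip D" "tip D = s"
      using has_tipI[OF that] by simp_all
    then show ?thesis
      using preserves[rule_format, of D] by simp
  qed
  have "mono T"
  proof (rule monoI)
    fix x y :: 'a assume "x \<le> y"
    then have "y \<in> dclos {x, y}" "\<forall>z\<in>{x, y}. z \<le> y"
      using dclos_superset[of "{x, y}"] by auto
    then have "has_tip (T ` {x, y}) \<and> T y = tip (T ` {x, y})"
      by (rule image_tip)
    moreover have "T x \<in> dclos (T ` {x, y})"
      using dclos_superset[of "T ` {x, y}"] by simp
    ultimately show "T x \<le> T y"
      using le_tip by metis
  qed
  then show ?thesis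
  proof (rule has_mcpI)
    fix D s u assume D: "dir_set D" "is_sup_of D s" and bound: "\<forall>x\<in>D. T x \<le> u"
    have "s \<in> dclos D" "\<forall>x\<in>D. x \<le> s"
      using D sup_in_dclos unfolding is_sup_of_def by blast+
    then have "has_tip (T ` D) \<and> T s = tip (T ` D)"
      by (rule image_tip)
    then have "T s \<in> dclos (T ` D)"
      using tip_in_dclos by metis
    then show "T s \<le> u"
      using dclos_subset_atMost[of "T ` D" u] bound by auto
  qed
qed

theorem mainTheorem2:
  fixes T :: "'a::order \<Rightarrow> 'b::order"
  defines "Pa \<equiv> has_mcp T"
    and "Pb \<equiv> mono T \<and> (\<forall>A u. (\<forall>a\<in>A. T a \<le> u) \<longrightarrow> (\<forall>a\<in>lclos A. T a \<le> u))"
    and "Pc \<equiv> mono T \<and> (\<forall>A. T ` dclos A \<subseteq> dclos (T ` A))"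
    and "Pd \<equiv> (\<forall>A. T ` lclos A \<subseteq> lclos (T ` A))"
    and "Pe \<equiv> (\<forall>A. has_tip A \<longrightarrow> has_tip (T ` A) \<and> T (tip A) = tip (T ` A))"
  shows "(Pa \<longleftrightarrow> Pb) \<and> (Pa \<longleftrightarrow> Pc) \<and> (Pa \<longleftrightarrow> Pd) \<and> (Pa \<longleftrightarrow> Pe)"
proof -
  have "Pa \<longleftrightarrow> Pd"
    unfolding Pa_def Pd_def using has_mcp_image_lclos[of T] has_mcp_if_image_lclos[of T]
    by blast
  moreover have "Pa \<longleftrightarrow> Pb"
    unfolding Pa_def Pb_def using has_mcp_mono[of T] has_mcp_image_lclos[of T]
      lclos_bounded_if_image_lclos[of T] has_mcp_if_lclos_bounded[of T] by blast
  moreover have "Pa \<longleftrightarrow> Pc"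
    unfolding Pa_def Pc_def using has_mcp_mono[of T] has_mcp_image_dclos[of T]
      has_mcp_if_image_dclos[of T] by blast
  moreover have "Pa \<longleftrightarrow> Pe"
    unfolding Pa_def Pe_def using has_mcp_tip[of T] has_mcp_if_tip[of T] by blast
  ultimately show ?thesis by blast
qed

end
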